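(* Let $D$ and $H$ be finite sets of doctors and hospitals with $|D|\ge 2$, $|H|\ge 2$, and let $P$ be a profile with common preferences. For positive integers $l,k$, the homogeneous arrangement $(l,k)$ is adequate at $P$ if and only if $l=k$ or $l,k\ge\min\{|D|,|H|\}$.
   Context: Each $h\in H$ has a strict preference $P_h$ over $D\cup\{h\}$ and each $d\in D$ a strict preference $P_d$ over $H\cup\{d\}$ (ranking below oneself means unacceptable). $P$ has common preferences if all doctors rank the hospitals identically, all hospitals rank the doctors identically, every hospital is acceptable to every doctor and every doctor is acceptable to every hospital. A matching is $\mu:H\cup D\to H\cup D$ with $\mu(h)\in D\cup\{h\}$, $\mu(d)\in H\cup\{d\}$, $\mu(d)=h$ iff $\mu(h)=d$; it is stable if no pair $(d,h)$ has $h\mathrel{P_d}\mu(d)$ and $d\mathrel{P_h}\mu(h)$. An interview arrangement $(\iota,\kappa)$ gives each hospital an interview capacity $\iota_h\in\mathbb N$ and each doctor $\kappa_d\in\mathbb N$; the homogeneous arrangement $(l,k)$ has $\iota_h=l$ for all $h$ and $\kappa_d=k$ for all $d$. An interview matching is a many-to-many matching $\nu$ ($\nu(d)\subseteq H$, $\nu(h)\subseteq D$, $h\in\nu(d)$ iff $d\in\nu(h)$) respecting the capacities. The $(\iota,\kappa)$-matching at $P$: Step 1, $\nu$ is the hospital-optimal pairwise stable interview matching, computed by hospital-proposing deferred acceptance where each agent chooses from a set of proposals its acceptable partners if at most capacity many, else its capacity-many best; Step 2, the final matching is the outcome of doctor-proposing deferred acceptance with each agent $i$'s preference restricted to $\nu(i)$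 (only interviewed, acceptable agents are acceptable, ranked by $P_i$). The arrangement is adequate at $P$ if the resulting matching is stable with respect to $P$. *)

theory Defs
  imports Main
begin

text \<open>The strict preference of an agent a over the other side
together with a itself is represented by the list of a's acceptable partners,
best first (partners ranked below a itself are exactly those not in the list;
their mutual order is irrelevant for everything below).  Being unmatched is
represented by None.\<close>

definition ranks_above :: "'a list \<Rightarrow> 'a \<Rightarrow> 'a \<Rightarrow> bool" where
  "ranks_above xs a b \<longleftrightarrow> (\<exists>i j. i < j \<and> j < length xs \<and> xs ! i = a \<and> xs ! j = b)"

definition prefers :: "'a list \<Rightarrow> 'a option \<Rightarrow> 'a option \<Rightarrow> bool" where
  "prefers xs x y = (case x of None \<Rightarrow> False
     | Some a \<Rightarrow> a \<in> set xs \<and> (case y of None \<Rightarrow> True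
                               | Some b \<Rightarrow> b \<notin> set xs \<or> ranks_above xs a b))"

definition common_prefs ::
  "'d set \<Rightarrow> 'h set \<Rightarrow> ('d \<Rightarrow> 'h list) \<Rightarrow> ('h \<Rightarrow> 'd list) \<Rightarrow> bool" where
  "common_prefs D H prefD prefH \<longleftrightarrow>
     (\<exists>ld lh. distinct ld \<and> set ld = D \<and> distinct lh \<and> set lh = H \<and>
        (\<forall>h\<in>H. prefH h = ld) \<and> (\<forall>d\<in>D. prefD d = lh))"

definition choose_best :: "'a list \<Rightarrow> nat \<Rightarrow> 'a set \<Rightarrow> 'a set" where
  "choose_best xs n S = set (take n (filter (\<lambda>x. x \<in> S) xs))"

text \<open>Many-to-many deferred acceptance, proposers 'p, receivers 'r.
The state is the set of (proposer, receiver) pairs in which the receiver has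
rejected the proposer so far.\<close>
definition da_proposals ::
  "('p \<Rightarrow> 'r list) \<Rightarrow> ('p \<Rightarrow> nat) \<Rightarrow> ('p \<times> 'r) set \<Rightarrow> 'p \<Rightarrow> 'r set" where
  "da_proposals pp cp Rej p = choose_best (pp p) (cp p) {r. (p, r) \<notin> Rej}"

definition da_held ::
  "'p set \<Rightarrow> ('p \<Rightarrow> 'r list) \<Rightarrow> ('r \<Rightarrow> 'p list) \<Rightarrow> ('p \<Rightarrow> nat) \<Rightarrow> ('r \<Rightarrow> nat)
     \<Rightarrow> ('p \<times> 'r) set \<Rightarrow> 'r \<Rightarrow> 'p set" where
  "da_held P pp pr cp cr Rej r =
     choose_best (pr r) (cr r) {p \<in> P. r \<in> da_proposals pp cp Rej p}"

definition da_step ::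
  "'p set \<Rightarrow> ('p \<Rightarrow> 'r list) \<Rightarrow> ('r \<Rightarrow> 'p list) \<Rightarrow> ('p \<Rightarrow> nat) \<Rightarrow> ('r \<Rightarrow> nat)
     \<Rightarrow> ('p \<times> 'r) set \<Rightarrow> ('p \<times> 'r) set" where
  "da_step P pp pr cp cr Rej = Rej \<union>
     {(p, r). p \<in> P \<and> r \<in> da_proposals pp cp Rej p \<and> p \<notin> da_held P pp pr cp cr Rej r}"

text \<open>Every non-final round adds a new rejected pair (p, r) with r in set (pp p), so
after (sum of list lengths) rounds the procedure has reached its fixpoint.\<close>
definition da_final_rej ::
  "'p set \<Rightarrow> ('p \<Rightarrow> 'r list) \<Rightarrow> ('r \<Rightarrow> 'p list) \<Rightarrow> ('p \<Rightarrow> nat) \<Rightarrow> ('r \<Rightarrow> nat)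
     \<Rightarrow> ('p \<times> 'r) set" where
  "da_final_rej P pp pr cp cr =
     (da_step P pp pr cp cr ^^ (\<Sum>p\<in>P. length (pp p))) {}"

definition deferred_acceptance ::
  "'p set \<Rightarrow> ('p \<Rightarrow> 'r list) \<Rightarrow> ('r \<Rightarrow> 'p list) \<Rightarrow> ('p \<Rightarrow> nat) \<Rightarrow> ('r \<Rightarrow> nat)
     \<Rightarrow> ('p \<times> 'r) set" where
  "deferred_acceptance P pp pr cp cr =
     (let Rej = da_final_rej P pp pr cp cr in
       {(p, r). p \<in> P \<and> r \<in> da_proposals pp cp Rej p \<and> p \<in> da_held P pp pr cp cr Rej r})"

definition interview_matching ::
  "'d set \<Rightarrow> 'h set \<Rightarrow> ('d \<Rightarrow> 'h list) \<Rightarrow> ('h \<Rightarrow> 'd list) \<Rightarrow> ('h \<Rightarrow> nat) \<Rightarrow> ('d \<Rightarrow> nat)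
     \<Rightarrow> ('h \<times> 'd) set" where
  "interview_matching D H prefD prefH iota kappa =
     deferred_acceptance H prefH prefD iota kappa"

definition ik_matching ::
  "'d set \<Rightarrow> 'h set \<Rightarrow> ('d \<Rightarrow> 'h list) \<Rightarrow> ('h \<Rightarrow> 'd list) \<Rightarrow> ('h \<Rightarrow> nat) \<Rightarrow> ('d \<Rightarrow> nat)
     \<Rightarrow> ('d \<times> 'h) set" where
  "ik_matching D H prefD prefH iota kappa =
     (let \<nu> = interview_matching D H prefD prefH iota kappa in
       deferred_acceptance D
         (\<lambda>d. filter (\<lambda>h. (h, d) \<in> \<nu>) (prefD d))
         (\<lambda>h. filter (\<lambda>d. (h, d) \<in> \<nu>) (prefH h))
         (\<lambda>_. 1) (\<lambda>_. 1))"

definition partner_of_d :: "('d \<times> 'h) set \<Rightarrow> 'd \<Rightarrow> 'h option" where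
  "partner_of_d M d = (if \<exists>h. (d, h) \<in> M then Some (SOME h. (d, h) \<in> M) else None)"

definition partner_of_h :: "('d \<times> 'h) set \<Rightarrow> 'h \<Rightarrow> 'd option" where
  "partner_of_h M h = (if \<exists>d. (d, h) \<in> M then Some (SOME d. (d, h) \<in> M) else None)"

definition stable ::
  "'d set \<Rightarrow> 'h set \<Rightarrow> ('d \<Rightarrow> 'h list) \<Rightarrow> ('h \<Rightarrow> 'd list) \<Rightarrow> ('d \<times> 'h) set \<Rightarrow> bool" where
  "stable D H prefD prefH M \<longleftrightarrow>
     (\<forall>d\<in>D. \<forall>h\<in>H. \<not> (prefers (prefD d) (Some h) (partner_of_d M d) \<and>
                       prefers (prefH h) (Some d) (partner_of_h M h)))"

definition adequate ::
  "'d set \<Rightarrow> 'h set \<Rightarrow> ('d \<Rightarrow> 'h list) \<Rightarrow> ('h \<Rightarrow> 'd list) \<Rightarrow> ('h \<Rightarrow> nat) \<Rightarrow> ('d \<Rightarrow> nat) \<Rightarrow> bool" where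
  "adequate D H prefD prefH iota kappa \<longleftrightarrow>
     stable D H prefD prefH (ik_matching D H prefD prefH iota kappa)"

end

theory Submission
  imports Defs
begin

text \<open>Under common preferences both steps of the (l,k)-procedure can be computed in terms of ranks.
  Cut the ranking of the doctors into consecutive blocks of l and that of the hospitals into blocks
  of k. Hospital-proposing deferred acceptance lets the b-th block of hospitals interview exactly
  the b-th block of doctors, and the second step matches assortatively inside each block, so the
  doctor of rank i gets the hospital of rank j iff i div l = j div k and i mod l = j mod k.
  If l = k, or both are at least min |D| |H|, the top min |D| |H| ranks on both sides are matched to
  each other, which is the stable matching. Otherwise, say l < k and l < min |D| |H|: the doctor of
  rank l gets the hospital of rank k while the hospital of rank l stays unmatched, so the two form
  a blocking pair.\<close>

definition rank :: "'a list \<Rightarrow> 'a \<Rightarrow> nat" where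
  "rank xs x = length (takeWhile (\<lambda>y. y \<noteq> x) xs)"

lemma rank_Nil [simp]: "rank [] x = 0"
  by (simp add: rank_def)

lemma rank_Cons [simp]: "rank (y # ys) x = (if x = y then 0 else Suc (rank ys x))"
  by (simp add: rank_def)

lemma rank_less_length: "x \<in> set xs \<Longrightarrow> rank xs x < length xs"
  by (induction xs) auto

lemma nth_rank: "x \<in> set xs \<Longrightarrow> xs ! rank xs x = x"
  by (induction xs) auto

lemma rank_nth: "distinct xs \<Longrightarrow> i < length xs \<Longrightarrow> rank xs (xs ! i) = i"
  by (metis nth_eq_iff_index_eq nth_mem nth_rank rank_less_length)

lemma ranks_above_iff_rank_less:
  assumes "distinct xs" "a \<in> set xs" "b \<in> set xs"
  shows "ranks_above xs a b \<longleftrightarrow> rank xs a < rank xs b"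
proof
  assume "ranks_above xs a b"
  then obtain i j where "i < j" "j < length xs" "xs ! i = a" "xs ! j = b"
    by (auto simp: ranks_above_def)
  then show "rank xs a < rank xs b"
    using rank_nth[OF assms(1)] by auto
next
  assume "rank xs a < rank xs b"
  then show "ranks_above xs a b"
    unfolding ranks_above_def
    using assms(2,3) by (intro exI[of _ "rank xs a"] exI[of _ "rank xs b"])
      (simp add: nth_rank rank_less_length)
qed

lemma filter_rank_eq_nths:
  "distinct xs \<Longrightarrow> filter (\<lambda>x. Q (rank xs x)) xs = nths xs {i. Q i}"
proof -
  assume "distinct xs"
  then have "filter (\<lambda>x. Q (rank xs x)) xs = nths xs ({i. Q i} \<inter> {..<length xs})"
    by (simp add: filter_eq_nths rank_nth Int_def conj_commute cong: conj_cong)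
  also have "\<dots> = nths xs {i. Q i}"
    unfolding nths_def by (intro arg_cong[where f = "map fst"] filter_cong) (auto simp: set_zip)
  finally show ?thesis .
qed

lemma take_drop_eq_nths: "take m (drop a xs) = nths xs {a..<a + m}"
  by (simp add: nths_drop lessThan_atLeast0 add.commute flip: nths_upt_eq_take)

lemma set_nths_rank: "distinct xs \<Longrightarrow> set (nths xs I) = {x \<in> set xs. rank xs x \<in> I}"
  by (auto simp: set_nths rank_nth in_set_conv_nth)

lemma rank_drop: "a \<le> rank xs y \<Longrightarrow> rank (drop a xs) y = rank xs y - a"
  by (induction xs arbitrary: a) (auto simp: drop_Cons split: nat.split if_splits)

lemma rank_take: "rank xs y < m \<Longrightarrow> rank (take m xs) y = rank xs y"
  by (induction xs arbitrary: m) (auto simp: take_Cons split: nat.split if_splits)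

lemma div_eq_iff_mult_le_less:
  fixes x c q :: nat
  assumes "0 < c"
  shows "x div c = q \<longleftrightarrow> c * q \<le> x \<and> x < c * q + c"
  using assms by (metis add.commute div_nat_eqI div_times_less_eq_dividend
    dividend_less_times_div mult.commute mult_Suc_right)

lemma filter_rank_div_ge:
  "distinct xs \<Longrightarrow> 0 < c \<Longrightarrow> filter (\<lambda>x. q \<le> rank xs x div c) xs = drop (c * q) xs"
  by (simp add: filter_rank_eq_nths drop_eq_nths less_eq_div_iff_mult_less_eq mult.commute)

lemma filter_rank_div_eq:
  "distinct xs \<Longrightarrow> 0 < c \<Longrightarrow> filter (\<lambda>x. rank xs x div c = q) xs = take c (drop (c * q) xs)"
proof -
  assume "distinct xs" "0 < c"
  then have "{i. i div c = q} = {c * q..<c * q + c}"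
    by (auto simp: div_eq_iff_mult_le_less)
  with \<open>distinct xs\<close> show ?thesis
    by (simp add: filter_rank_eq_nths[of xs "\<lambda>i. i div c = q"] take_drop_eq_nths)
qed

lemma set_take_drop_eq_rank_div:
  "distinct xs \<Longrightarrow> 0 < c \<Longrightarrow> set (take c (drop (c * q) xs)) = {x \<in> set xs. rank xs x div c = q}"
  by (auto simp: take_drop_eq_nths set_nths_rank div_eq_iff_mult_le_less)

lemma rank_filter_div_eq:
  assumes "distinct xs" "y \<in> set xs" "0 < c"
  shows "rank (filter (\<lambda>x. rank xs x div c = rank xs y div c) xs) y = rank xs y mod c"
proof -
  define q where "q = rank xs y div c"
  have "c * q \<le> rank xs y" "rank xs y < c * q + c"
    using div_eq_iff_mult_le_less[OF assms(3)] q_def by blast+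
  then have "rank (take c (drop (c * q) xs)) y = rank xs y - c * q"
    by (simp add: rank_take rank_drop)
  also have "\<dots> = rank xs y mod c"
    by (simp add: q_def minus_mult_div_eq_mod)
  finally show ?thesis
    by (simp add: filter_rank_div_eq assms(1,3) flip: q_def)
qed

lemma set_take_filter_rank_div_ge:
  "distinct xs \<Longrightarrow> 0 < c \<Longrightarrow>
    set (take c (filter (\<lambda>x. q \<le> rank xs x div c) xs)) = {x \<in> set xs. rank xs x div c = q}"
  by (simp add: filter_rank_div_ge set_take_drop_eq_rank_div)

lemma set_take_filter_min_rank_div:
  assumes "distinct xs" "0 < c"
  shows "set (take c (filter (\<lambda>x. min t (rank xs x div c) = q) xs)) =
    {x \<in> set xs. rank xs x div c = q \<and> q \<le> t}"
proof (cases q t rule: linorder_cases)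
  case less
  then have "filter (\<lambda>x. min t (rank xs x div c) = q) xs = filter (\<lambda>x. rank xs x div c = q) xs"
    by (intro filter_cong) auto
  then show ?thesis
    using less assms by (simp add: filter_rank_div_eq set_take_drop_eq_rank_div)
next
  case equal
  then have "filter (\<lambda>x. min t (rank xs x div c) = q) xs = filter (\<lambda>x. q \<le> rank xs x div c) xs"
    by (intro filter_cong) auto
  then show ?thesis
    using equal assms by (simp add: set_take_filter_rank_div_ge)
next
  case greater
  then show ?thesis
    by (auto simp: filter_empty_conv)
qed

locale grouped_common_ranking =
  fixes Lp :: "'p list" and Lr :: "'r list"
    and gp :: "'p \<Rightarrow> 'g" and gr :: "'r \<Rightarrow> 'g"
    and pp :: "'p \<Rightarrow> 'r list" and pr :: "'r \<Rightarrow> 'p list"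
    and cp cr :: nat
  assumes distinct_Lp: "distinct Lp" and distinct_Lr: "distinct Lr"
    and pp_eq: "p \<in> set Lp \<Longrightarrow> pp p = filter (\<lambda>r. gr r = gp p) Lr"
    and pr_eq: "r \<in> set Lr \<Longrightarrow> pr r = filter (\<lambda>p. gp p = gr r) Lp"
    and cp_pos: "0 < cp" and cr_pos: "0 < cr"
begin

definition block_p :: "'p \<Rightarrow> nat" where
  "block_p p = rank (filter (\<lambda>x. gp x = gp p) Lp) p div cr"

definition block_r :: "'r \<Rightarrow> nat" where
  "block_r r = rank (filter (\<lambda>x. gr x = gr r) Lr) r div cp"

text \<open>In round t a proposer of block b proposes to the receivers of block min t b, which keep
  exactly the proposers of their own block.\<close>

definition rejected_before :: "nat \<Rightarrow> ('p \<times> 'r) set" where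
  "rejected_before t = {(p, r). p \<in> set Lp \<and> r \<in> set Lr \<and> gr r = gp p \<and>
      block_r r < min t (block_p p)}"

lemma proposals_rejected_before:
  assumes "p \<in> set Lp"
  shows "da_proposals pp (\<lambda>_. cp) (rejected_before t) p =
    {r \<in> set Lr. gr r = gp p \<and> block_r r = min t (block_p p)}"
proof -
  define fl where "fl = filter (\<lambda>r. gr r = gp p) Lr"
  have "distinct fl"
    using distinct_Lr by (simp add: fl_def)
  have set_fl: "set fl = {r \<in> set Lr. gr r = gp p}"
    by (simp add: fl_def)
  have block_fl: "block_r r = rank fl r div cp" if "gr r = gp p" for r
    using that by (simp add: block_r_def fl_def)
  have "filter (\<lambda>r. r \<in> {r. (p, r) \<notin> rejected_before t}) fl =
      filter (\<lambda>r. min t (block_p p) \<le> rank fl r div cp) fl"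
  proof (intro filter_cong refl)
    fix r
    assume "r \<in> set fl"
    then have "r \<in> set Lr" "gr r = gp p"
      by (simp_all add: set_fl)
    then show "r \<in> {r. (p, r) \<notin> rejected_before t} \<longleftrightarrow> min t (block_p p) \<le> rank fl r div cp"
      using assms by (simp add: rejected_before_def block_fl not_less min_le_iff_disj)
  qed
  then have "da_proposals pp (\<lambda>_. cp) (rejected_before t) p =
      {r \<in> set fl. rank fl r div cp = min t (block_p p)}"
    using \<open>distinct fl\<close> cp_pos
    by (simp add: da_proposals_def choose_best_def pp_eq[OF assms] set_take_filter_rank_div_ge
        flip: fl_def)
  then show ?thesis
    using block_fl by (auto simp: set_fl)
qed

lemma held_rejected_before:
  assumes "r \<in> set Lr"
  shows "da_held (set Lp) pp pr (\<lambda>_. cp) (\<lambda>_. cr) (rejected_before t) r =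
    {p \<in> set Lp. gp p = gr r \<and> block_p p = block_r r \<and> block_r r \<le> t}"
proof -
  define fl where "fl = filter (\<lambda>p. gp p = gr r) Lp"
  have "distinct fl"
    using distinct_Lp by (simp add: fl_def)
  have set_fl: "set fl = {p \<in> set Lp. gp p = gr r}"
    by (simp add: fl_def)
  have block_fl: "block_p p = rank fl p div cr" if "gp p = gr r" for p
    using that by (simp add: block_p_def fl_def)
  have "filter (\<lambda>p. p \<in> {p \<in> set Lp. r \<in> da_proposals pp (\<lambda>_. cp) (rejected_before t) p}) fl =
      filter (\<lambda>p. min t (rank fl p div cr) = block_r r) fl"
  proof (intro filter_cong refl)
    fix p
    assume "p \<in> set fl"
    then have "p \<in> set Lp" "gp p = gr r"
      by (simp_all add: set_fl)
    then show "p \<in> {p \<in> set Lp. r \<in> da_proposals pp (\<lambda>_. cp) (rejected_before t) p} \<longleftrightarrow>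
        min t (rank fl p div cr) = block_r r"
      using assms by (auto simp: proposals_rejected_before block_fl)
  qed
  then have "da_held (set Lp) pp pr (\<lambda>_. cp) (\<lambda>_. cr) (rejected_before t) r =
      {p \<in> set fl. rank fl p div cr = block_r r \<and> block_r r \<le> t}"
    using \<open>distinct fl\<close> cr_pos
    by (simp add: da_held_def choose_best_def pr_eq[OF assms] set_take_filter_min_rank_div
        flip: fl_def)
  then show ?thesis
    using block_fl by (auto simp: set_fl)
qed

lemma da_step_rejected_before:
  "da_step (set Lp) pp pr (\<lambda>_. cp) (\<lambda>_. cr) (rejected_before t) = rejected_before (Suc t)"
proof -
  have "(p, r) \<in> da_step (set Lp) pp pr (\<lambda>_. cp) (\<lambda>_. cr) (rejected_before t) \<longleftrightarrow>
      (p, r) \<in> rejected_before (Suc t)" for p r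
  proof (cases "p \<in> set Lp \<and> r \<in> set Lr \<and> gr r = gp p")
    case True
    then have mem: "(p, r) \<in> rejected_before t' \<longleftrightarrow> block_r r < min t' (block_p p)" for t'
      by (simp add: rejected_before_def)
    have "block_r r < min t (block_p p) \<or>
        (block_r r = min t (block_p p) \<and> \<not> (block_p p = block_r r \<and> block_r r \<le> t)) \<longleftrightarrow>
        block_r r < min (Suc t) (block_p p)"
      by (cases "t \<le> block_p p") (auto simp: min_def)
    with True show ?thesis
      by (simp add: da_step_def mem proposals_rejected_before held_rejected_before)
  next
    case False
    then have "(p, r) \<notin> rejected_before t'" for t'
      by (auto simp: rejected_before_def)
    moreover have "r \<notin> da_proposals pp (\<lambda>_. cp) (rejected_before t) p" if "p \<in> set Lp"
      using False that by (auto simp: proposals_rejected_before)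
    ultimately show ?thesis
      by (auto simp: da_step_def)
  qed
  then show ?thesis
    by auto
qed

lemma funpow_da_step_eq_rejected_before: "(da_step (set Lp) pp pr (\<lambda>_. cp) (\<lambda>_. cr) ^^ t) {} = rejected_before t"
proof (induction t)
  case 0
  then show ?case
    by (simp add: rejected_before_def)
next
  case (Suc t)
  then show ?case
    by (simp add: da_step_rejected_before)
qed

lemma block_r_le_sum_length:
  assumes "p \<in> set Lp" "r \<in> set Lr" "gr r = gp p"
  shows "block_r r \<le> (\<Sum>p\<in>set Lp. length (pp p))"
proof -
  have "block_r r \<le> rank (pp p) r"
    using assms by (simp add: block_r_def pp_eq)
  also have "\<dots> < length (pp p)"
    using assms by (intro rank_less_length) (simp add: pp_eq)
  also have "\<dots> \<le> (\<Sum>p\<in>set Lp. length (pp p))"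
    using assms by (intro member_le_sum) auto
  finally show ?thesis
    by simp
qed

lemma deferred_acceptance_eq_same_block:
  "deferred_acceptance (set Lp) pp pr (\<lambda>_. cp) (\<lambda>_. cr) =
    {(p, r). p \<in> set Lp \<and> r \<in> set Lr \<and> gr r = gp p \<and> block_r r = block_p p}"
proof -
  define N where "N = (\<Sum>p\<in>set Lp. length (pp p))"
  have final: "da_final_rej (set Lp) pp pr (\<lambda>_. cp) (\<lambda>_. cr) = rejected_before N"
    by (simp add: da_final_rej_def funpow_da_step_eq_rejected_before N_def)
  have "(p, r) \<in> deferred_acceptance (set Lp) pp pr (\<lambda>_. cp) (\<lambda>_. cr) \<longleftrightarrow>
      p \<in> set Lp \<and> r \<in> set Lr \<and> gr r = gp p \<and> block_r r = block_p p" for p r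
  proof (cases "p \<in> set Lp \<and> r \<in> set Lr \<and> gr r = gp p")
    case True
    then have "(p, r) \<in> deferred_acceptance (set Lp) pp pr (\<lambda>_. cp) (\<lambda>_. cr) \<longleftrightarrow>
        block_r r = min N (block_p p) \<and> block_p p = block_r r \<and> block_r r \<le> N"
      by (simp add: deferred_acceptance_def Let_def final proposals_rejected_before
          held_rejected_before)
    also have "\<dots> \<longleftrightarrow> block_r r = block_p p"
      using True block_r_le_sum_length[of p r] unfolding N_def by linarith
    finally show ?thesis
      using True by blast
  next
    case False
    then show ?thesis
      by (auto simp: deferred_acceptance_def Let_def final proposals_rejected_before)
  qed
  then show ?thesis
    by auto
qed

end

lemma prefers_Some_choice_iff:
  assumes "distinct xs" "y \<in> set xs"
    and P_iff: "\<And>x. P x \<longleftrightarrow> x \<in> set xs \<and> S (rank xs x)"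
    and S_unique: "\<And>j j'. S j \<Longrightarrow> S j' \<Longrightarrow> j = j'"
  shows "prefers xs (Some y) (if \<exists>x. P x then Some (SOME x. P x) else None) \<longleftrightarrow>
    (\<forall>j<length xs. S j \<longrightarrow> rank xs y < j)"
proof (cases "\<exists>x. P x")
  case True
  define x where "x = (SOME x. P x)"
  have "P x"
    using True someI_ex x_def by metis
  then have x: "x \<in> set xs" "S (rank xs x)"
    by (simp_all add: P_iff)
  have "prefers xs (Some y) (Some x) \<longleftrightarrow> rank xs y < rank xs x"
    using assms(1,2) x(1) by (simp add: prefers_def ranks_above_iff_rank_less)
  also have "\<dots> \<longleftrightarrow> (\<forall>j<length xs. S j \<longrightarrow> rank xs y < j)"
  proof
    assume "rank xs y < rank xs x"
    then show "\<forall>j<length xs. S j \<longrightarrow> rank xs y < j"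
      using S_unique[OF x(2)] by blast
  qed (use x rank_less_length[OF x(1)] in blast)
  finally show ?thesis
    using True by (simp flip: x_def)
next
  case False
  have "\<not> S j" if "j < length xs" for j
    using False that P_iff[of "xs ! j"] rank_nth[OF assms(1)] by auto
  then show ?thesis
    using False assms(2) by (simp add: prefers_def)
qed

text \<open>Ranks stand for agents, 0 being the best: R i j means that the doctor of rank i is matched
  to the hospital of rank j.\<close>

definition blocking_ranks :: "nat \<Rightarrow> nat \<Rightarrow> (nat \<Rightarrow> nat \<Rightarrow> bool) \<Rightarrow> nat \<Rightarrow> nat \<Rightarrow> bool" where
  "blocking_ranks n m R i j \<longleftrightarrow>
     i < n \<and> j < m \<and> (\<forall>j'<m. R i j' \<longrightarrow> j < j') \<and> (\<forall>i'<n. R i' j \<longrightarrow> i < i')"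

definition rank_match :: "nat \<Rightarrow> nat \<Rightarrow> nat \<Rightarrow> nat \<Rightarrow> bool" where
  "rank_match l k i j \<longleftrightarrow> i div l = j div k \<and> i mod l = j mod k"

lemma rank_match_right_unique: "rank_match l k i j \<Longrightarrow> rank_match l k i j' \<Longrightarrow> j = j'"
  unfolding rank_match_def by (metis div_mult_mod_eq)

lemma rank_match_left_unique: "rank_match l k i j \<Longrightarrow> rank_match l k i' j \<Longrightarrow> i = i'"
  unfolding rank_match_def by (metis div_mult_mod_eq)

lemma no_blocking_ranks_if_diagonal:
  assumes diagonal: "\<And>x. x < min n m \<Longrightarrow> R x x"
  shows "\<not> blocking_ranks n m R i j"
proof
  assume blocking: "blocking_ranks n m R i j"
  show False
  proof (cases "i < m")
    case True
    with blocking diagonal have "j < i"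
      by (simp add: blocking_ranks_def)
    with blocking diagonal have "i < j"
      by (simp add: blocking_ranks_def)
    with \<open>j < i\<close> show False
      by simp
  next
    case False
    with blocking diagonal have "i < j"
      by (simp add: blocking_ranks_def)
    with False blocking show False
      by (simp add: blocking_ranks_def)
  qed
qed

lemma blocking_ranks_swap:
  "blocking_ranks n m R i j \<longleftrightarrow> blocking_ranks m n (\<lambda>j i. R i j) j i"
  by (auto simp: blocking_ranks_def)

lemma rank_match_swap: "rank_match l k i j \<longleftrightarrow> rank_match k l j i"
  by (auto simp: rank_match_def)

lemma blocking_ranks_rank_match:
  assumes "0 < l" "l < k" "l < n" "l < m"
  shows "blocking_ranks n m (rank_match l k) l l"
proof -
  have "l < j" if "rank_match l k l j" for j
  proof -
    from that \<open>0 < l\<close> have "j div k = 1"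
      by (simp add: rank_match_def)
    then have "k \<le> j"
      by (metis div_less not_le zero_neq_one)
    with \<open>l < k\<close> show ?thesis
      by simp
  qed
  moreover have "\<not> rank_match l k i l" for i
    using assms(2) mod_less_divisor[OF assms(1), of i] by (auto simp: rank_match_def)
  ultimately show ?thesis
    using assms by (simp add: blocking_ranks_def)
qed

lemma exists_blocking_ranks_rank_match_iff:
  assumes "0 < l" "0 < k"
  shows "(\<exists>i j. blocking_ranks n m (rank_match l k) i j) \<longleftrightarrow>
    \<not> (l = k \<or> (min n m \<le> l \<and> min n m \<le> k))"
proof
  assume blocking: "\<exists>i j. blocking_ranks n m (rank_match l k) i j"
  show "\<not> (l = k \<or> (min n m \<le> l \<and> min n m \<le> k))"
  proof
    assume "l = k \<or> (min n m \<le> l \<and> min n m \<le> k)"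
    then have "rank_match l k x x" if "x < min n m" for x
      using that by (auto simp: rank_match_def)
    then have "\<not> blocking_ranks n m (rank_match l k) i j" for i j
      by (rule no_blocking_ranks_if_diagonal)
    with blocking show False
      by blast
  qed
next
  assume "\<not> (l = k \<or> (min n m \<le> l \<and> min n m \<le> k))"
  then consider "l < k" "l < min n m" | "k < l" "k < min n m"
    by linarith
  then show "\<exists>i j. blocking_ranks n m (rank_match l k) i j"
  proof cases
    case 1
    with assms have "blocking_ranks n m (rank_match l k) l l"
      by (intro blocking_ranks_rank_match) auto
    then show ?thesis
      by blast
  next
    case 2
    with assms have "blocking_ranks m n (rank_match k l) k k"
      by (intro blocking_ranks_rank_match) auto
    moreover have "(\<lambda>j i. rank_match l k i j) = rank_match k l"
      by (intro ext) (rule rank_match_swap)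
    ultimately show ?thesis
      using blocking_ranks_swap[of n m "rank_match l k" k k] by auto
  qed
qed

locale common_ranking =
  fixes D :: "'d set" and H :: "'h set"
    and prefD :: "'d \<Rightarrow> 'h list" and prefH :: "'h \<Rightarrow> 'd list"
    and ld :: "'d list" and lh :: "'h list"
  assumes distinct_ld: "distinct ld" and set_ld: "set ld = D"
    and distinct_lh: "distinct lh" and set_lh: "set lh = H"
    and prefD_eq: "d \<in> D \<Longrightarrow> prefD d = lh"
    and prefH_eq: "h \<in> H \<Longrightarrow> prefH h = ld"
begin

lemma length_ld: "length ld = card D"
  using distinct_card[OF distinct_ld] by (simp add: set_ld)

lemma length_lh: "length lh = card H"
  using distinct_card[OF distinct_lh] by (simp add: set_lh)

lemma stable_iff_no_blocking_ranks:
  assumes M: "M = {(d, h). d \<in> D \<and> h \<in> H \<and> R (rank ld d) (rank lh h)}"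
    and R_right_unique: "\<And>i j j'. R i j \<Longrightarrow> R i j' \<Longrightarrow> j = j'"
    and R_left_unique: "\<And>i i' j. R i j \<Longrightarrow> R i' j \<Longrightarrow> i = i'"
  shows "stable D H prefD prefH M \<longleftrightarrow> \<not> (\<exists>i j. blocking_ranks (card D) (card H) R i j)"
proof -
  have doctor: "prefers (prefD d) (Some h) (partner_of_d M d) \<longleftrightarrow>
      (\<forall>j<card H. R (rank ld d) j \<longrightarrow> rank lh h < j)" if "d \<in> D" "h \<in> H" for d h
    unfolding partner_of_d_def prefD_eq[OF that(1)] length_lh[symmetric]
    using that distinct_lh R_right_unique
    by (intro prefers_Some_choice_iff) (auto simp: M set_lh)
  have hospital: "prefers (prefH h) (Some d) (partner_of_h M h) \<longleftrightarrow>
      (\<forall>i<card D. R i (rank lh h) \<longrightarrow> rank ld d < i)" if "d \<in> D" "h \<in> H" for d h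
    unfolding partner_of_h_def prefH_eq[OF that(2)] length_ld[symmetric]
    using that distinct_ld R_left_unique
    by (intro prefers_Some_choice_iff) (auto simp: M set_ld)
  have "stable D H prefD prefH M \<longleftrightarrow>
      (\<forall>d\<in>D. \<forall>h\<in>H. \<not> blocking_ranks (card D) (card H) R (rank ld d) (rank lh h))"
    using rank_less_length[of _ ld] rank_less_length[of _ lh]
    by (simp add: stable_def blocking_ranks_def doctor hospital length_ld length_lh set_ld set_lh)
  also have "\<dots> \<longleftrightarrow> \<not> (\<exists>i j. blocking_ranks (card D) (card H) R i j)"
  proof (intro iffI notI)
    assume no_blocking: "\<forall>d\<in>D. \<forall>h\<in>H. \<not> blocking_ranks (card D) (card H) R (rank ld d) (rank lh h)"
    assume "\<exists>i j. blocking_ranks (card D) (card H) R i j"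
    then obtain i j where blocking: "blocking_ranks (card D) (card H) R i j"
      by blast
    then have "i < length ld" "j < length lh"
      by (simp_all add: blocking_ranks_def length_ld length_lh)
    then have "ld ! i \<in> D" "lh ! j \<in> H" "rank ld (ld ! i) = i" "rank lh (lh ! j) = j"
      using set_ld set_lh rank_nth[OF distinct_ld] rank_nth[OF distinct_lh] by auto
    then show False
      using no_blocking blocking by metis
  qed blast
  finally show ?thesis .
qed

lemma interview_matching_eq:
  assumes "0 < l" "0 < k"
  shows "interview_matching D H prefD prefH (\<lambda>_. l) (\<lambda>_. k) =
    {(h, d). h \<in> H \<and> d \<in> D \<and> rank ld d div l = rank lh h div k}"
proof -
  interpret stage1: grouped_common_ranking lh ld "\<lambda>_. ()" "\<lambda>_. ()" prefH prefD l k
    using assms by unfold_locales (simp_all add: distinct_ld distinct_lh prefD_eq prefH_eq set_ld set_lh)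
  show ?thesis
    using stage1.deferred_acceptance_eq_same_block
    by (auto simp: interview_matching_def stage1.block_p_def stage1.block_r_def set_ld set_lh)
qed

lemma ik_matching_eq:
  assumes "0 < l" "0 < k"
  shows "ik_matching D H prefD prefH (\<lambda>_. l) (\<lambda>_. k) =
    {(d, h). d \<in> D \<and> h \<in> H \<and> rank_match l k (rank ld d) (rank lh h)}"
proof -
  define \<nu> where "\<nu> = interview_matching D H prefD prefH (\<lambda>_. l) (\<lambda>_. k)"
  define gd where "gd d = rank ld d div l" for d
  define gh where "gh h = rank lh h div k" for h
  interpret stage2: grouped_common_ranking ld lh gd gh
      "\<lambda>d. filter (\<lambda>h. (h, d) \<in> \<nu>) (prefD d)" "\<lambda>h. filter (\<lambda>d. (h, d) \<in> \<nu>) (prefH h)" 1 1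
    by unfold_locales (auto simp: distinct_ld distinct_lh prefD_eq prefH_eq set_ld set_lh
        \<nu>_def interview_matching_eq[OF assms] gd_def gh_def intro!: filter_cong)
  have "stage2.block_p d = rank ld d mod l" if "d \<in> D" for d
    unfolding stage2.block_p_def gd_def
    using rank_filter_div_eq[OF distinct_ld _ assms(1)] that by (simp add: set_ld)
  moreover have "stage2.block_r h = rank lh h mod k" if "h \<in> H" for h
    unfolding stage2.block_r_def gh_def
    using rank_filter_div_eq[OF distinct_lh _ assms(2)] that by (simp add: set_lh)
  ultimately show ?thesis
    using stage2.deferred_acceptance_eq_same_block
    by (auto simp: ik_matching_def Let_def rank_match_def gd_def gh_def set_ld set_lh simp flip: \<nu>_def)
qed

end

theorem proposition2:
  fixes D :: "'d set" and H :: "'h set"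
    and prefD :: "'d \<Rightarrow> 'h list" and prefH :: "'h \<Rightarrow> 'd list"
    and l k :: nat
  assumes "finite D" and "finite H"
    and "card D \<ge> 2" and "card H \<ge> 2"
    and "common_prefs D H prefD prefH"
    and "l \<ge> 1" and "k \<ge> 1"
  shows "adequate D H prefD prefH (\<lambda>_. l) (\<lambda>_. k) \<longleftrightarrow>
           (l = k \<or> (l \<ge> min (card D) (card H) \<and> k \<ge> min (card D) (card H)))"
proof -
  obtain ld lh where "common_ranking D H prefD prefH ld lh"
    using assms(5) unfolding common_prefs_def common_ranking_def by blast
  then interpret common_ranking D H prefD prefH ld lh .
  have pos: "0 < l" "0 < k"
    using assms(6,7) by simp_all
  have "adequate D H prefD prefH (\<lambda>_. l) (\<lambda>_. k) \<longleftrightarrow>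
      \<not> (\<exists>i j. blocking_ranks (card D) (card H) (rank_match l k) i j)"
    unfolding adequate_def ik_matching_eq[OF pos]
    by (rule stable_iff_no_blocking_ranks) (auto intro: rank_match_right_unique rank_match_left_unique)
  also have "\<dots> \<longleftrightarrow> (l = k \<or> (l \<ge> min (card D) (card H) \<and> k \<ge> min (card D) (card H)))"
    by (simp add: exists_blocking_ranks_rank_match_iff[OF pos])
  finally show ?thesis .
qed

end
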